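(* If $(S,K,I)$ is a split graph, then the factor graph $\Phi(S)$ cannot contain an induced path $v_1v_2v_3v_4$ with $\sigma_{23}=1$ and $d_1\leq d_2\leq d_4$.
   Context: A split graph $(S,K,I)$ is a graph $S$ together with a fixed partition $V(S)=K\dot\cup I$, where $K$ is a clique and $I$ is an independent set. For a vertex $v_i$ of $S$, $N_i$ denotes its open neighborhood in $S$ and $d_i=|N_i|$; $\eta_{uv}=|N_u\cap N_v|$. The factor graph $\Phi(S)$ is the loopless multigraph with vertex set $I$ in which, for distinct $u,v\in I$, there is one edge joining $u$ and $v$ for each 2-switch of $S$ acting on $u$ and $v$ (a 2-switch replaces edges $ab,cd$ with $ac,bd$ when $ab,cd\in E(S)$ and $ac,bd\notin E(S)$); equivalently, the multiplicity of $uv$ is $\sigma_{uv}=(d_u-\eta_{uv})(d_v-\eta_{uv})$, and $u,v$ are adjacent iff $\sigma_{uv}>0$; $\sigma_{ij}$ denotes $\sigma_{v_iv_j}$. An induced path in $\Phi(S)$ consists of distinct vertices with consecutive ones adjacent and no other pair adjacent (multiplicities ignored). *)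

theory Defs
  imports Main
begin

definition simple_graph :: "'a set \<Rightarrow> ('a \<Rightarrow> 'a \<Rightarrow> bool) \<Rightarrow> bool" where
  "simple_graph V E \<longleftrightarrow> finite V \<and> (\<forall>x y. E x y \<longrightarrow> E y x) \<and> (\<forall>x. \<not> E x x)
     \<and> (\<forall>x y. E x y \<longrightarrow> x \<in> V \<and> y \<in> V)"

definition split_graph :: "'a set \<Rightarrow> ('a \<Rightarrow> 'a \<Rightarrow> bool) \<Rightarrow> 'a set \<Rightarrow> 'a set \<Rightarrow> bool" where
  "split_graph V E K I \<longleftrightarrow> simple_graph V E \<and> K \<union> I = V \<and> K \<inter> I = {}
     \<and> (\<forall>x\<in>K. \<forall>y\<in>K. x \<noteq> y \<longrightarrow> E x y)
     \<and> (\<forall>x\<in>I. \<forall>y\<in>I. \<not> E x y)"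

definition nbhd :: "'a set \<Rightarrow> ('a \<Rightarrow> 'a \<Rightarrow> bool) \<Rightarrow> 'a \<Rightarrow> 'a set" where
  "nbhd V E v = {w \<in> V. E v w}"

definition deg :: "'a set \<Rightarrow> ('a \<Rightarrow> 'a \<Rightarrow> bool) \<Rightarrow> 'a \<Rightarrow> nat" where
  "deg V E v = card (nbhd V E v)"

definition eta :: "'a set \<Rightarrow> ('a \<Rightarrow> 'a \<Rightarrow> bool) \<Rightarrow> 'a \<Rightarrow> 'a \<Rightarrow> nat" where
  "eta V E u v = card (nbhd V E u \<inter> nbhd V E v)"

text \<open>Multiplicity of the edge uv in the factor graph.\<close>
definition sigma :: "'a set \<Rightarrow> ('a \<Rightarrow> 'a \<Rightarrow> bool) \<Rightarrow> 'a \<Rightarrow> 'a \<Rightarrow> nat" where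
  "sigma V E u v = (deg V E u - eta V E u v) * (deg V E v - eta V E u v)"

text \<open>Adjacency in the factor graph Phi(S) (vertex set I), multiplicities ignored.\<close>
definition factor_adj :: "'a set \<Rightarrow> ('a \<Rightarrow> 'a \<Rightarrow> bool) \<Rightarrow> 'a set \<Rightarrow> 'a \<Rightarrow> 'a \<Rightarrow> bool" where
  "factor_adj V E I u v \<longleftrightarrow> u \<in> I \<and> v \<in> I \<and> u \<noteq> v \<and> sigma V E u v > 0"

definition factor_induced_P4 :: "'a set \<Rightarrow> ('a \<Rightarrow> 'a \<Rightarrow> bool) \<Rightarrow> 'a set \<Rightarrow> 'a \<Rightarrow> 'a \<Rightarrow> 'a \<Rightarrow> 'a \<Rightarrow> bool" where
  "factor_induced_P4 V E I v1 v2 v3 v4 \<longleftrightarrow>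
     v1 \<in> I \<and> v2 \<in> I \<and> v3 \<in> I \<and> v4 \<in> I \<and> distinct [v1, v2, v3, v4]
     \<and> factor_adj V E I v1 v2 \<and> factor_adj V E I v2 v3 \<and> factor_adj V E I v3 v4
     \<and> \<not> factor_adj V E I v1 v3 \<and> \<not> factor_adj V E I v1 v4 \<and> \<not> factor_adj V E I v2 v4"

end

theory Submission
  imports Defs
begin

text \<open>Since \<open>\<sigma>\<^sub>u\<^sub>v = |N\<^sub>u - N\<^sub>v| \<cdot> |N\<^sub>v - N\<^sub>u|\<close>, two vertices are adjacent in \<open>\<Phi>(S)\<close> exactly when
  their neighbourhoods are incomparable, and \<open>\<sigma>\<^sub>2\<^sub>3 = 1\<close> gives \<open>N\<^sub>3 - N\<^sub>2 = {b}\<close>.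
  The non-edges \<open>v\<^sub>1v\<^sub>4\<close>, \<open>v\<^sub>2v\<^sub>4\<close> and \<open>d\<^sub>1 \<le> d\<^sub>2 \<le> d\<^sub>4\<close> force \<open>N\<^sub>1, N\<^sub>2 \<subseteq> N\<^sub>4\<close>.
  If \<open>N\<^sub>3 \<subseteq> N\<^sub>1\<close> then \<open>N\<^sub>3 \<subseteq> N\<^sub>4\<close> at once; otherwise \<open>N\<^sub>1 \<subseteq> N\<^sub>3\<close>, so every vertex of
  \<open>N\<^sub>1 - N\<^sub>2 \<noteq> {}\<close> is \<open>b\<close>, and again \<open>N\<^sub>3 \<subseteq> N\<^sub>2 \<union> {b} \<subseteq> N\<^sub>4\<close>, contradicting the edge
  \<open>v\<^sub>3v\<^sub>4\<close>.\<close>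

lemma subset_if_nested_card_le:
  assumes "finite A" "A \<subseteq> B \<or> B \<subseteq> A" "card A \<le> card B"
  shows "A \<subseteq> B"
  using assms card_seteq by blast

lemma nested_sets_no_path:
  assumes fin: "finite N\<^sub>1" "finite N\<^sub>2"
    and not12: "\<not> N\<^sub>1 \<subseteq> N\<^sub>2" and single23: "N\<^sub>3 - N\<^sub>2 = {b}" and not34: "\<not> N\<^sub>3 \<subseteq> N\<^sub>4"
    and nested13: "N\<^sub>1 \<subseteq> N\<^sub>3 \<or> N\<^sub>3 \<subseteq> N\<^sub>1"
    and nested14: "N\<^sub>1 \<subseteq> N\<^sub>4 \<or> N\<^sub>4 \<subseteq> N\<^sub>1"
    and nested24: "N\<^sub>2 \<subseteq> N\<^sub>4 \<or> N\<^sub>4 \<subseteq> N\<^sub>2"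
    and card: "card N\<^sub>1 \<le> card N\<^sub>2" "card N\<^sub>2 \<le> card N\<^sub>4"
  shows False
proof -
  have sub24: "N\<^sub>2 \<subseteq> N\<^sub>4"
    using subset_if_nested_card_le[OF fin(2) nested24 card(2)] .
  have sub14: "N\<^sub>1 \<subseteq> N\<^sub>4"
    using subset_if_nested_card_le[OF fin(1) nested14] card by linarith
  from nested13 show False
  proof
    assume "N\<^sub>1 \<subseteq> N\<^sub>3"
    obtain x where x: "x \<in> N\<^sub>1" "x \<notin> N\<^sub>2"
      using not12 by blast
    with \<open>N\<^sub>1 \<subseteq> N\<^sub>3\<close> have "x \<in> N\<^sub>3 - N\<^sub>2"
      by blast
    with single23 x have "b \<in> N\<^sub>1"
      by simp
    moreover have "N\<^sub>3 \<subseteq> insert b N\<^sub>2"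
      using single23 by auto
    ultimately have "N\<^sub>3 \<subseteq> N\<^sub>4"
      using sub14 sub24 by blast
    with not34 show False ..
  next
    assume "N\<^sub>3 \<subseteq> N\<^sub>1"
    with sub14 not34 show False by blast
  qed
qed

lemma finite_nbhd: "finite V \<Longrightarrow> finite (nbhd V E u)"
  unfolding nbhd_def by simp

lemma deg_minus_eta:
  assumes "finite V"
  shows "deg V E u - eta V E u v = card (nbhd V E u - nbhd V E v)"
  unfolding deg_def eta_def
  using card_Diff_subset_Int[of "nbhd V E u" "nbhd V E v"] finite_nbhd[OF assms]
  by (simp add: Diff_Int)

lemma sigma_eq_card_Diff:
  assumes "finite V"
  shows "sigma V E u v = card (nbhd V E u - nbhd V E v) * card (nbhd V E v - nbhd V E u)"
  unfolding sigma_def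
  using deg_minus_eta[OF assms, of E u v] deg_minus_eta[OF assms, of E v u]
  by (simp add: eta_def Int_commute)

lemma sigma_pos_iff_not_nested:
  assumes "finite V"
  shows "sigma V E u v > 0 \<longleftrightarrow> \<not> nbhd V E u \<subseteq> nbhd V E v \<and> \<not> nbhd V E v \<subseteq> nbhd V E u"
  using sigma_eq_card_Diff[OF assms] finite_nbhd[OF assms]
  by (simp add: card_gt_0_iff)

lemma sigma_eq_1_imp_singleton_Diff:
  assumes "finite V" "sigma V E u v = 1"
  obtains b where "nbhd V E v - nbhd V E u = {b}"
  using sigma_eq_card_Diff[OF assms(1), of E u v] assms(2)
  by (auto simp: card_1_singleton_iff)

lemma factor_adj_iff_not_nested:
  assumes "finite V" "u \<in> I" "v \<in> I" "u \<noteq> v"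
  shows "factor_adj V E I u v \<longleftrightarrow> \<not> nbhd V E u \<subseteq> nbhd V E v \<and> \<not> nbhd V E v \<subseteq> nbhd V E u"
  using assms by (simp add: factor_adj_def sigma_pos_iff_not_nested)

lemma factor_induced_P4_nbhd:
  assumes fin: "finite V" and path: "factor_induced_P4 V E I v1 v2 v3 v4"
  shows "\<not> nbhd V E v1 \<subseteq> nbhd V E v2" "\<not> nbhd V E v3 \<subseteq> nbhd V E v4"
    and "nbhd V E v1 \<subseteq> nbhd V E v3 \<or> nbhd V E v3 \<subseteq> nbhd V E v1"
    and "nbhd V E v1 \<subseteq> nbhd V E v4 \<or> nbhd V E v4 \<subseteq> nbhd V E v1"
    and "nbhd V E v2 \<subseteq> nbhd V E v4 \<or> nbhd V E v4 \<subseteq> nbhd V E v2"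
  using path unfolding factor_induced_P4_def
  by (auto simp add: factor_adj_iff_not_nested[OF fin])

theorem lemma4p5:
  fixes V K I :: "'a set" and E :: "'a \<Rightarrow> 'a \<Rightarrow> bool"
  assumes "split_graph V E K I"
  shows "\<not> (\<exists>v1 v2 v3 v4. factor_induced_P4 V E I v1 v2 v3 v4
              \<and> sigma V E v2 v3 = 1
              \<and> deg V E v1 \<le> deg V E v2 \<and> deg V E v2 \<le> deg V E v4)"
proof
  assume "\<exists>v1 v2 v3 v4. factor_induced_P4 V E I v1 v2 v3 v4
              \<and> sigma V E v2 v3 = 1
              \<and> deg V E v1 \<le> deg V E v2 \<and> deg V E v2 \<le> deg V E v4"
  then obtain v1 v2 v3 v4 where path: "factor_induced_P4 V E I v1 v2 v3 v4"
    and sigma23: "sigma V E v2 v3 = 1"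
    and degs: "deg V E v1 \<le> deg V E v2" "deg V E v2 \<le> deg V E v4"
    by blast
  have fin: "finite V"
    using assms unfolding split_graph_def simple_graph_def by blast
  obtain b where single23: "nbhd V E v3 - nbhd V E v2 = {b}"
    using sigma_eq_1_imp_singleton_Diff[OF fin sigma23] .
  note nbhds = factor_induced_P4_nbhd[OF fin path]
  show False
    using nested_sets_no_path[OF finite_nbhd[OF fin] finite_nbhd[OF fin] nbhds(1) single23
        nbhds(2-5) degs[unfolded deg_def]] .
qed

end
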